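(* For any finite simple graph $G$, $|\operatorname{nucleus}(G)| + |\operatorname{diadem}(G)| \le 2\alpha(G)$.
   Context: For $X\subseteq V(G)$, $N(X)$ is the set of vertices adjacent to some vertex of $X$, and $d(X)=|X|-|N(X)|$. A set is independent if no two of its vertices are adjacent. An independent set $S$ is critical if $d(S)=\max\{d(X):X\subseteq V(G)\}$; the empty set may be critical. A maximum critical independent set is a critical independent set of maximum cardinality. $\operatorname{nucleus}(G)$ and $\operatorname{diadem}(G)$ are, respectively, the intersection and the union of all maximum critical independent sets of $G$. $\alpha(G)$ is the independence number. *)

theory Defs
  imports Main
begin

definition simple_graph :: "'a set \<Rightarrow> ('a \<Rightarrow> 'a \<Rightarrow> bool) \<Rightarrow> bool" where
  "simple_graph V E \<longleftrightarrow> finite V \<and> (\<forall>u v. E u v \<longrightarrow> u \<in> V \<and> v \<in> V)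
     \<and> (\<forall>u v. E u v \<longrightarrow> E v u) \<and> (\<forall>v. \<not> E v v)"

definition nbhd :: "'a set \<Rightarrow> ('a \<Rightarrow> 'a \<Rightarrow> bool) \<Rightarrow> 'a set \<Rightarrow> 'a set" where
  "nbhd V E X = {v \<in> V. \<exists>x \<in> X. E x v}"

definition dif :: "'a set \<Rightarrow> ('a \<Rightarrow> 'a \<Rightarrow> bool) \<Rightarrow> 'a set \<Rightarrow> int" where
  "dif V E X = int (card X) - int (card (nbhd V E X))"

definition indep :: "'a set \<Rightarrow> ('a \<Rightarrow> 'a \<Rightarrow> bool) \<Rightarrow> 'a set \<Rightarrow> bool" where
  "indep V E S \<longleftrightarrow> S \<subseteq> V \<and> (\<forall>x \<in> S. \<forall>y \<in> S. \<not> E x y)"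

definition critical_difference :: "'a set \<Rightarrow> ('a \<Rightarrow> 'a \<Rightarrow> bool) \<Rightarrow> int" where
  "critical_difference V E = Max (dif V E ` Pow V)"

definition critical_indep :: "'a set \<Rightarrow> ('a \<Rightarrow> 'a \<Rightarrow> bool) \<Rightarrow> 'a set \<Rightarrow> bool" where
  "critical_indep V E S \<longleftrightarrow> indep V E S \<and> dif V E S = critical_difference V E"

definition max_critical_indep :: "'a set \<Rightarrow> ('a \<Rightarrow> 'a \<Rightarrow> bool) \<Rightarrow> 'a set \<Rightarrow> bool" where
  "max_critical_indep V E S \<longleftrightarrow> critical_indep V E S \<and>
     (\<forall>T. critical_indep V E T \<longrightarrow> card T \<le> card S)"

definition nucleus :: "'a set \<Rightarrow> ('a \<Rightarrow> 'a \<Rightarrow> bool) \<Rightarrow> 'a set" where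
  "nucleus V E = \<Inter> {S. max_critical_indep V E S}"

definition diadem :: "'a set \<Rightarrow> ('a \<Rightarrow> 'a \<Rightarrow> bool) \<Rightarrow> 'a set" where
  "diadem V E = \<Union> {S. max_critical_indep V E S}"

definition indep_number :: "'a set \<Rightarrow> ('a \<Rightarrow> 'a \<Rightarrow> bool) \<Rightarrow> nat" where
  "indep_number V E = Max (card ` {S. indep V E S})"

end

theory Submission
  imports Defs
begin

text \<open>Let \<open>S\<close> be a maximum critical independent set and \<open>K\<close> the nucleus. Since \<open>d\<close> is
  supermodular, the sets attaining the critical difference are closed under union and
  intersection; hence \<open>K\<close> is critical and \<open>d(K) = d(S)\<close> gives \<open>|N(S)| - |N(K)| = |S| - |K|\<close>.
  Every critical independent set \<open>T\<close> lies in \<open>S \<union> N(S)\<close>: removing \<open>N(S \<union> T)\<close> from the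
  critical set \<open>S \<union> T\<close> leaves a critical independent set that may be added to \<open>S\<close>, so by
  maximality it lies inside \<open>S\<close>. A maximum critical independent set also contains \<open>K\<close> and
  so avoids \<open>N(K)\<close>. Thus the diadem lies in \<open>S \<union> (N(S) - N(K))\<close>, whence
  \<open>|diadem| \<le> |S| + |N(S)| - |N(K)| = 2|S| - |K|\<close> and \<open>|S| \<le> \<alpha>\<close>.\<close>

lemma nbhd_subset: "nbhd V E X \<subseteq> V"
  by (auto simp: nbhd_def)

lemma nbhd_Un: "nbhd V E (A \<union> B) = nbhd V E A \<union> nbhd V E B"
  by (auto simp: nbhd_def)

lemma nbhd_mono: "A \<subseteq> B \<Longrightarrow> nbhd V E A \<subseteq> nbhd V E B"
  by (auto simp: nbhd_def)

lemma finite_nbhd: "finite V \<Longrightarrow> finite (nbhd V E X)"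
  using finite_subset[OF nbhd_subset] .

lemma indep_disjoint_nbhd: "indep V E T \<Longrightarrow> K \<subseteq> T \<Longrightarrow> T \<inter> nbhd V E K = {}"
  by (auto simp: indep_def nbhd_def)

lemma dif_le_critical_difference:
  "finite V \<Longrightarrow> X \<subseteq> V \<Longrightarrow> dif V E X \<le> critical_difference V E"
  unfolding critical_difference_def by (intro Max_ge) auto

lemma critical_difference_attained:
  assumes "finite V"
  obtains X where "X \<subseteq> V" "dif V E X = critical_difference V E"
proof -
  have "critical_difference V E \<in> dif V E ` Pow V"
    unfolding critical_difference_def using assms by (intro Max_in) auto
  with that show ?thesis by auto
qed

lemma dif_supermodular:
  assumes "finite V" "A \<subseteq> V" "B \<subseteq> V"
  shows "dif V E A + dif V E B \<le> dif V E (A \<union> B) + dif V E (A \<inter> B)"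
proof -
  have "finite A" "finite B"
    using assms finite_subset by auto
  then have cards: "card A + card B = card (A \<union> B) + card (A \<inter> B)"
    by (rule card_Un_Int)
  have nbhds: "card (nbhd V E A) + card (nbhd V E B)
      = card (nbhd V E (A \<union> B)) + card (nbhd V E A \<inter> nbhd V E B)"
    unfolding nbhd_Un using assms(1) by (intro card_Un_Int finite_nbhd)
  have "nbhd V E (A \<inter> B) \<subseteq> nbhd V E A \<inter> nbhd V E B"
    by (auto simp: nbhd_def)
  then have "card (nbhd V E (A \<inter> B)) \<le> card (nbhd V E A \<inter> nbhd V E B)"
    using assms(1) by (intro card_mono) (auto intro: finite_nbhd)
  with cards nbhds show ?thesis
    unfolding dif_def by linarith
qed

lemma critical_Un_Int:
  assumes "finite V" "A \<subseteq> V" "B \<subseteq> V"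
    and "dif V E A = critical_difference V E" "dif V E B = critical_difference V E"
  shows "dif V E (A \<union> B) = critical_difference V E"
    and "dif V E (A \<inter> B) = critical_difference V E"
proof -
  have "dif V E (A \<union> B) \<le> critical_difference V E" "dif V E (A \<inter> B) \<le> critical_difference V E"
    using assms(1-3) by (auto intro: dif_le_critical_difference)
  with dif_supermodular[OF assms(1-3), of E] assms(4,5)
  show "dif V E (A \<union> B) = critical_difference V E" "dif V E (A \<inter> B) = critical_difference V E"
    by linarith+
qed

lemma critical_Inter:
  assumes "finite V" "finite F" "F \<noteq> {}"
    and "\<And>X. X \<in> F \<Longrightarrow> X \<subseteq> V \<and> dif V E X = critical_difference V E"
  shows "dif V E (\<Inter>F) = critical_difference V E"
proof -
  have "\<Inter>F \<subseteq> V \<and> dif V E (\<Inter>F) = critical_difference V E"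
    using assms(2-4)
  proof (induction F rule: finite_ne_induct)
    case (singleton X)
    then show ?case by simp
  next
    case (insert X F)
    then show ?case
      using critical_Un_Int(2)[OF assms(1), of X "\<Inter>F" E] by auto
  qed
  then show ?thesis ..
qed

text \<open>Vertices of \<open>X \<inter> N(X)\<close> have no neighbour in \<open>X - N(X)\<close>, so removing them loses at
  least as many neighbours as elements.\<close>

lemma strip_nbhd:
  assumes "finite V" "X \<subseteq> V" and "symp E"
  shows "indep V E (X - nbhd V E X)"
    and "dif V E X \<le> dif V E (X - nbhd V E X)"
proof -
  let ?I = "X - nbhd V E X" and ?R = "X \<inter> nbhd V E X"
  show "indep V E ?I"
    using assms(2) by (auto simp: indep_def nbhd_def)
  have "nbhd V E ?I \<inter> ?R = {}"
    using assms(2,3) by (auto simp: nbhd_def dest: sympD)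
  moreover have "nbhd V E ?I \<union> ?R \<subseteq> nbhd V E X"
    using nbhd_mono[of ?I X V E] by auto
  moreover have "finite (nbhd V E ?I)" "finite ?R"
    using assms(1) finite_nbhd by auto
  ultimately have "card (nbhd V E ?I) + card ?R \<le> card (nbhd V E X)"
    using assms(1) by (simp add: card_Un_disjoint[symmetric] card_mono finite_nbhd)
  moreover have "card X = card ?I + card ?R"
    using card_Int_Diff[OF finite_subset[OF assms(2,1)], of "nbhd V E X"] by linarith
  ultimately show "dif V E X \<le> dif V E ?I"
    unfolding dif_def by linarith
qed

lemma indep_Un_strip_nbhd:
  assumes "symp E" and "S \<subseteq> X" "X \<subseteq> V" "indep V E S"
  shows "indep V E ((X - nbhd V E X) \<union> S)"
  using assms unfolding indep_def nbhd_def by (blast dest: sympD)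

lemma finite_critical_indep: "finite V \<Longrightarrow> finite {T. critical_indep V E T}"
  by (rule finite_subset[of _ "Pow V"]) (auto simp: critical_indep_def indep_def)

lemma max_critical_indep_exists:
  assumes "finite V" and "symp E"
  obtains S where "max_critical_indep V E S"
proof -
  obtain X where X: "X \<subseteq> V" "dif V E X = critical_difference V E"
    using critical_difference_attained[OF assms(1)] .
  have "X - nbhd V E X \<subseteq> V"
    using X(1) by blast
  then have "critical_indep V E (X - nbhd V E X)"
    using strip_nbhd[OF assms(1) X(1) assms(2)] X dif_le_critical_difference[OF assms(1)]
    unfolding critical_indep_def by (metis order.antisym)
  then have "card ` {T. critical_indep V E T} \<noteq> {}"
    by blast
  then have "Max (card ` {T. critical_indep V E T}) \<in> card ` {T. critical_indep V E T}"
    using finite_critical_indep[OF assms(1)] by (intro Max_in) auto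
  then obtain S where S: "critical_indep V E S" "card S = Max (card ` {T. critical_indep V E T})"
    by auto
  have "max_critical_indep V E S"
    unfolding max_critical_indep_def
    using S finite_critical_indep[OF assms(1)] by auto
  then show ?thesis ..
qed

lemma critical_indep_subset_Un_nbhd:
  assumes "finite V" and "symp E"
    and S: "max_critical_indep V E S" and T: "critical_indep V E T"
  shows "T \<subseteq> S \<union> nbhd V E S"
proof -
  have Sc: "S \<subseteq> V" "dif V E S = critical_difference V E" "indep V E S"
    and Tc: "T \<subseteq> V" "dif V E T = critical_difference V E" "indep V E T"
    using S T by (auto simp: max_critical_indep_def critical_indep_def indep_def)
  let ?X = "S \<union> T"
  let ?I = "?X - nbhd V E ?X"
  have X: "?X \<subseteq> V" "dif V E ?X = critical_difference V E"
    using Sc Tc critical_Un_Int(1)[OF assms(1) Sc(1) Tc(1)] by auto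
  have I: "?I \<subseteq> V" "indep V E ?I" "dif V E ?I = critical_difference V E"
    using X strip_nbhd[OF assms(1) X(1) assms(2)] dif_le_critical_difference[OF assms(1), of ?I E]
    by auto
  have "indep V E (?I \<union> S)"
    using indep_Un_strip_nbhd[OF assms(2) _ X(1) Sc(3)] by blast
  then have "critical_indep V E (?I \<union> S)"
    using critical_Un_Int(1)[OF assms(1) I(1) Sc(1) I(3) Sc(2)] by (simp add: critical_indep_def)
  then have "card (?I \<union> S) \<le> card S"
    using S by (auto simp: max_critical_indep_def)
  then have "S = ?I \<union> S"
    using I(1) Sc(1) finite_subset[OF _ assms(1)] by (intro card_seteq) auto
  then have I_sub: "?I \<subseteq> S"
    by blast
  show ?thesis
  proof
    fix v assume "v \<in> T"
    show "v \<in> S \<union> nbhd V E S"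
    proof (cases "v \<in> S")
      case False
      with I_sub \<open>v \<in> T\<close> obtain x where "x \<in> ?X" "E x v"
        by (auto simp: nbhd_def)
      moreover have "x \<notin> T"
        using \<open>E x v\<close> \<open>v \<in> T\<close> Tc(3) by (auto simp: indep_def)
      ultimately show ?thesis
        using \<open>v \<in> T\<close> Tc(1) by (auto simp: nbhd_def)
    qed simp
  qed
qed

lemma diadem_subset:
  assumes "finite V" and "symp E"
    and S: "max_critical_indep V E S"
  shows "diadem V E \<subseteq> S \<union> (nbhd V E S - nbhd V E (nucleus V E))"
proof
  fix v assume "v \<in> diadem V E"
  then obtain T where T: "max_critical_indep V E T" "v \<in> T"
    by (auto simp: diadem_def)
  then have T_crit: "critical_indep V E T" and T_indep: "indep V E T"
    by (simp_all add: max_critical_indep_def critical_indep_def)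
  have "nucleus V E \<subseteq> T"
    unfolding nucleus_def using T(1) by (rule Inter_lower[OF CollectI])
  then have "v \<notin> nbhd V E (nucleus V E)"
    using indep_disjoint_nbhd[OF T_indep] T(2) by blast
  moreover have "v \<in> S \<union> nbhd V E S"
    using critical_indep_subset_Un_nbhd[OF assms T_crit] T(2) by blast
  ultimately show "v \<in> S \<union> (nbhd V E S - nbhd V E (nucleus V E))"
    by blast
qed

lemma dif_nucleus:
  assumes "finite V" and S: "max_critical_indep V E S"
  shows "dif V E (nucleus V E) = critical_difference V E"
  unfolding nucleus_def
proof (rule critical_Inter[OF assms(1)])
  show "finite {S. max_critical_indep V E S}"
    using finite_critical_indep[OF assms(1), of E]
    by (rule finite_subset[rotated]) (auto simp: max_critical_indep_def)
  show "{S. max_critical_indep V E S} \<noteq> {}"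
    using S by blast
qed (auto simp: max_critical_indep_def critical_indep_def indep_def)

lemma card_le_indep_number:
  assumes "finite V" "indep V E S"
  shows "card S \<le> indep_number V E"
proof -
  have "{S. indep V E S} \<subseteq> Pow V"
    by (auto simp: indep_def)
  then have "finite {S. indep V E S}"
    using assms(1) by (simp add: finite_subset)
  then show ?thesis
    unfolding indep_number_def using assms(2) by (intro Max_ge) auto
qed

lemma card_nucleus_diadem_le:
  assumes "finite V" "symp E" and S: "max_critical_indep V E S"
  shows "card (nucleus V E) + card (diadem V E) \<le> 2 * card S"
proof -
  let ?K = "nucleus V E"
  have "S \<subseteq> V"
    using S by (simp add: max_critical_indep_def critical_indep_def indep_def)
  then have fin_S: "finite S"
    using assms(1) by (rule finite_subset)
  have "?K \<subseteq> S"
    using S by (auto simp: nucleus_def)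
  then have NK: "nbhd V E ?K \<subseteq> nbhd V E S"
    by (rule nbhd_mono)
  have "card (diadem V E) \<le> card (S \<union> (nbhd V E S - nbhd V E ?K))"
    using diadem_subset[OF assms] fin_S finite_nbhd[OF assms(1)] by (intro card_mono) auto
  also have "\<dots> \<le> card S + (card (nbhd V E S) - card (nbhd V E ?K))"
    using card_Un_le[of S "nbhd V E S - nbhd V E ?K"]
      card_Diff_subset[OF finite_subset[OF NK finite_nbhd[OF assms(1)]] NK] by simp
  finally have "card (diadem V E) \<le> card S + (card (nbhd V E S) - card (nbhd V E ?K))" .
  moreover have "dif V E ?K = dif V E S"
    using dif_nucleus[OF assms(1) S] S by (simp add: max_critical_indep_def critical_indep_def)
  moreover have "card (nbhd V E ?K) \<le> card (nbhd V E S)"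
    using NK by (intro card_mono finite_nbhd assms(1))
  ultimately show ?thesis
    unfolding dif_def by linarith
qed

theorem theorem1p7:
  fixes V :: "'a set" and E :: "'a \<Rightarrow> 'a \<Rightarrow> bool"
  assumes "simple_graph V E"
  shows "card (nucleus V E) + card (diadem V E) \<le> 2 * indep_number V E"
proof -
  have fin: "finite V" and sym: "symp E"
    using assms unfolding simple_graph_def by (auto intro: sympI)
  obtain S where S: "max_critical_indep V E S"
    using max_critical_indep_exists[OF fin sym] .
  then have "indep V E S"
    by (simp add: max_critical_indep_def critical_indep_def)
  then have "card S \<le> indep_number V E"
    using fin by (intro card_le_indep_number)
  with card_nucleus_diadem_le[OF fin sym S] show ?thesis
    by linarith
qed

end
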